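(* Let $\nu,\lambda$ be the $\boxplus$-infinitely divisible probability measures with Voiculescu transforms $\phi_\nu(z)=\frac{1}{z-1}$ and $\phi_\lambda(z)=\frac{1}{z+1}$. Then $\nu,\lambda\in\mathcal{UI}$ but $\nu\boxplus\lambda\notin\mathcal{UI}$ (where $\phi_{\nu\boxplus\lambda}(z)=\frac1{z-1}+\frac1{z+1}$). In particular $\mathcal{UI}$ is not closed under $\boxplus$, and $\mathcal{UI}$ is a proper subset of the set of $\boxplus$-infinitely divisible distributions.
   Context: For a probability measure $\mu$ on $\mathbb{R}$, $F_\mu(z)=1/\int\frac{\mu(dx)}{z-x}$ on $\mathbb{C}_+$; the Voiculescu transform is $\phi_\mu(z)=F_\mu^{-1}(z)-z$ on a truncated cone $\{\operatorname{Im}z>M,\operatorname{Im}z>\eta|\operatorname{Re}z|\}$, and $\phi_{\mu\boxplus\nu}=\phi_\mu+\phi_\nu$ there ($\boxplus$ = free additive convolution). Any analytic $\phi:\mathbb{C}_+\to\mathbb{C}_-\cup\mathbb{R}$ with $\phi(z)=o(|z|)$ nontangentially at infinity (as here) is the Voiculescu transform of a unique $\boxplus$-infinitely divisible measure. $\mu\in\mathcal{UI}$ means: $F_\mu$ is univalent on $\mathbb{C}_+$ and $F_\mu^{-1}:F_\mu(\mathbb{C}_+)\to\mathbb{C}_+$ extends analytically to a univalent function on $\mathbb{C}_+$. *)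

theory Defs
  imports "HOL-Probability.Probability"
begin

definition upper_half :: "complex set" where
  "upper_half = {z. Im z > 0}"

definition real_prob_measure :: "real measure \<Rightarrow> bool" where
  "real_prob_measure \<mu> \<longleftrightarrow> prob_space \<mu> \<and> sets \<mu> = sets borel"

definition cauchy_transform :: "real measure \<Rightarrow> complex \<Rightarrow> complex" where
  "cauchy_transform \<mu> z = integral\<^sup>L \<mu> (\<lambda>x. 1 / (z - complex_of_real x))"

definition F_transform :: "real measure \<Rightarrow> complex \<Rightarrow> complex" where
  "F_transform \<mu> z = 1 / cauchy_transform \<mu> z"

definition trunc_cone :: "real \<Rightarrow> real \<Rightarrow> complex set" where
  "trunc_cone \<eta> M = {z. Im z > M \<and> Im z > \<eta> * \<bar>Re z\<bar>}"

text \<open>phi is the Voiculescu transform of mu: on some truncated cone,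
  z + phi z = F_mu^{-1}(z), i.e. z + phi z lies in the upper half plane and
  F_mu (z + phi z) = z.\<close>
definition has_voiculescu_transform :: "real measure \<Rightarrow> (complex \<Rightarrow> complex) \<Rightarrow> bool" where
  "has_voiculescu_transform \<mu> \<phi> \<longleftrightarrow>
     (\<exists>\<eta>>0. \<exists>M>0. \<forall>z\<in>trunc_cone \<eta> M.
        z + \<phi> z \<in> upper_half \<and> F_transform \<mu> (z + \<phi> z) = z)"

text \<open>The class UI: F_mu univalent on the upper half plane, and its inverse
  (defined on F_mu(upper half plane)) extends to an analytic univalent function
  on the upper half plane.\<close>
definition UI :: "real measure \<Rightarrow> bool" where
  "UI \<mu> \<longleftrightarrow> inj_on (F_transform \<mu>) upper_half \<and>
     (\<exists>h. h holomorphic_on upper_half \<and> inj_on h upper_half \<and>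
          (\<forall>z\<in>upper_half. h (F_transform \<mu> z) = z))"

end

theory Submission
  imports Defs "HOL-Complex_Analysis.Complex_Analysis"
begin

text \<open>
  \<open>F\<^sub>\<mu>\<close> is holomorphic and maps the upper half plane \<open>\<complex>\<^sub>+\<close> into itself, and
  \<open>H(z) = z + \<phi>(z)\<close> inverts it on a truncated cone. By the identity theorem, \<open>\<mu> \<in> UI\<close>
  exactly when \<open>H\<close> is univalent on \<open>\<complex>\<^sub>+\<close>: an extension of the inverse of \<open>F\<^sub>\<mu>\<close> must
  agree with \<open>H\<close>, and conversely \<open>H \<circ> F\<^sub>\<mu> = id\<close> holds on the image of the cone, which is
  open by the open mapping theorem, hence everywhere. The map \<open>z + 1/(z - c)\<close> is
  univalent on \<open>\<complex>\<^sub>+\<close>, since \<open>(a - c)(b - c) = 1\<close> forces \<open>Im a\<close> and \<open>Im b\<close> to have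
  opposite signs, whereas \<open>z + 1/(z - 1) + 1/(z + 1)\<close> takes the value \<open>-3i/10\<close> both
  at \<open>i/2\<close> and at \<open>i(\<surd>19 - 2)/5\<close>.
\<close>

lemma open_upper_half: "open upper_half"
  unfolding upper_half_def by (rule open_halfspace_Im_gt)

lemma connected_upper_half: "connected upper_half"
  unfolding upper_half_def by (rule convex_connected[OF convex_halfspace_Im_gt])

lemma Im_le_norm_diff_of_real: "Im z \<le> norm (z - complex_of_real x)"
  using abs_Im_le_cmod[of "z - complex_of_real x"] by simp

lemma diff_of_real_nonzero: "Im z > 0 \<Longrightarrow> z - complex_of_real x \<noteq> 0"
  by (auto simp: complex_eq_iff)

lemma integrable_bounded_continuous:
  fixes f :: "real \<Rightarrow> 'b::{banach, second_countable_topology}"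
  assumes "real_prob_measure \<mu>" "continuous_on UNIV f" "\<And>x. norm (f x) \<le> B"
  shows "integrable \<mu> f"
proof -
  interpret prob_space \<mu>
    using assms(1) unfolding real_prob_measure_def by simp
  have "sets \<mu> = sets borel"
    using assms(1) unfolding real_prob_measure_def by simp
  moreover have "f \<in> borel_measurable borel"
    using assms(2) by (rule borel_measurable_continuous_onI)
  ultimately have "f \<in> borel_measurable \<mu>"
    using measurable_cong_sets[of \<mu> borel borel borel] by simp
  with assms(3) show ?thesis
    by (intro integrable_const_bound[where B = B]) auto
qed

lemma norm_integral_le_bound:
  fixes f :: "real \<Rightarrow> 'b::{banach, second_countable_topology}"
  assumes "real_prob_measure \<mu>" "continuous_on UNIV f" "\<And>x. norm (f x) \<le> B"
  shows "norm (integral\<^sup>L \<mu> f) \<le> B"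
proof -
  interpret prob_space \<mu>
    using assms(1) unfolding real_prob_measure_def by simp
  have "norm (integral\<^sup>L \<mu> f) \<le> integral\<^sup>L \<mu> (\<lambda>x. norm (f x))"
    by (rule integral_norm_bound)
  also have "\<dots> \<le> integral\<^sup>L \<mu> (\<lambda>x. B)"
    using integrable_bounded_continuous[OF assms] assms(3) by (intro integral_mono) auto
  also have "\<dots> = B"
    by (simp add: prob_space)
  finally show ?thesis .
qed

lemma integrable_cauchy_kernel_power:
  assumes "real_prob_measure \<mu>" "Im z > 0"
  shows "integrable \<mu> (\<lambda>x. 1 / (z - complex_of_real x) ^ n)"
proof (rule integrable_bounded_continuous[OF assms(1)])
  show "continuous_on UNIV (\<lambda>x. 1 / (z - complex_of_real x) ^ n)"
    using diff_of_real_nonzero[OF assms(2)] by (intro continuous_intros) auto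
  fix x
  have "Im z ^ n \<le> norm (z - complex_of_real x) ^ n"
    using assms(2) Im_le_norm_diff_of_real by (intro power_mono) auto
  then show "norm (1 / (z - complex_of_real x) ^ n) \<le> 1 / Im z ^ n"
    using assms(2) by (simp add: norm_divide norm_power frac_le)
qed

lemma cauchy_transform_difference_quotient:
  assumes \<mu>: "real_prob_measure \<mu>" and z: "Im z > 0" and w: "Im w > 0" and "w \<noteq> z"
  shows "(cauchy_transform \<mu> w - cauchy_transform \<mu> z) / (w - z)
           + integral\<^sup>L \<mu> (\<lambda>x. 1 / (z - complex_of_real x) ^ 2)
         = integral\<^sup>L \<mu> (\<lambda>x. (w - z) / ((w - complex_of_real x) * (z - complex_of_real x) ^ 2))"
proof -
  have iw: "integrable \<mu> (\<lambda>x. 1 / (w - complex_of_real x))"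
    using integrable_cauchy_kernel_power[OF \<mu> w, of 1] by simp
  have iz: "integrable \<mu> (\<lambda>x. 1 / (z - complex_of_real x))"
    using integrable_cauchy_kernel_power[OF \<mu> z, of 1] by simp
  have iz2: "integrable \<mu> (\<lambda>x. 1 / (z - complex_of_real x) ^ 2)"
    by (rule integrable_cauchy_kernel_power[OF \<mu> z])
  have "(cauchy_transform \<mu> w - cauchy_transform \<mu> z) / (w - z)
          + integral\<^sup>L \<mu> (\<lambda>x. 1 / (z - complex_of_real x) ^ 2)
        = integral\<^sup>L \<mu> (\<lambda>x. (1 / (w - complex_of_real x) - 1 / (z - complex_of_real x)) / (w - z)
                                + 1 / (z - complex_of_real x) ^ 2)"
    unfolding cauchy_transform_def
    by (simp only: Bochner_Integration.integral_add[OF integrable_divide[OF Bochner_Integration.integrable_diff[OF iw iz]] iz2]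
        integral_divide_zero Bochner_Integration.integral_diff[OF iw iz])
  also have "\<dots> = integral\<^sup>L \<mu> (\<lambda>x. (w - z) / ((w - complex_of_real x) * (z - complex_of_real x) ^ 2))"
  proof (intro Bochner_Integration.integral_cong refl)
    have identity: "(1 / a - 1 / b) / (a - b) + 1 / b ^ 2 = (a - b) / (a * b ^ 2)"
      if "a \<noteq> 0" "b \<noteq> 0" "a \<noteq> b" for a b :: complex
      using that by (simp add: field_simps power2_eq_square)
    show "(1 / (w - complex_of_real x) - 1 / (z - complex_of_real x)) / (w - z)
                 + 1 / (z - complex_of_real x) ^ 2
               = (w - z) / ((w - complex_of_real x) * (z - complex_of_real x) ^ 2)" for x
      using identity[of "w - complex_of_real x" "z - complex_of_real x"] \<open>w \<noteq> z\<close>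
        diff_of_real_nonzero[OF w, of x] diff_of_real_nonzero[OF z, of x]
      by simp
  qed
  finally show ?thesis .
qed

lemma has_field_derivative_cauchy_transform:
  assumes \<mu>: "real_prob_measure \<mu>" and z: "Im z > 0"
  shows "(cauchy_transform \<mu> has_field_derivative
           - integral\<^sup>L \<mu> (\<lambda>x. 1 / (z - complex_of_real x) ^ 2)) (at z)"
proof -
  define G where "G = cauchy_transform \<mu>"
  define D where "D = - integral\<^sup>L \<mu> (\<lambda>x. 1 / (z - complex_of_real x) ^ 2)"
  have bound: "norm ((G w - G z) / (w - z) - D) \<le> norm (w - z) * (2 / Im z ^ 3)"
    if w: "Im w > Im z / 2" and "w \<noteq> z" for w
  proof -
    have "(G w - G z) / (w - z) - D
          = integral\<^sup>L \<mu> (\<lambda>x. (w - z) / ((w - complex_of_real x) * (z - complex_of_real x) ^ 2))"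
      using cauchy_transform_difference_quotient[OF \<mu> z _ \<open>w \<noteq> z\<close>] w z
      unfolding G_def D_def by simp
    also have "norm \<dots> \<le> norm (w - z) * (2 / Im z ^ 3)"
    proof (rule norm_integral_le_bound[OF \<mu>])
      show "continuous_on UNIV (\<lambda>x. (w - z) / ((w - complex_of_real x) * (z - complex_of_real x) ^ 2))"
        using diff_of_real_nonzero[of w] diff_of_real_nonzero[of z] w z
        by (intro continuous_intros) auto
      fix x
      have le: "Im z / 2 * Im z ^ 2 \<le> norm (w - complex_of_real x) * norm (z - complex_of_real x) ^ 2"
        using Im_le_norm_diff_of_real[of w x] Im_le_norm_diff_of_real[of z x] w z
        by (intro mult_mono power_mono) auto
      have "Im z / 2 * Im z ^ 2 > 0"
        using z by simp
      with le have "norm (w - complex_of_real x) * norm (z - complex_of_real x) ^ 2 * (Im z / 2 * Im z ^ 2) > 0"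
        by (metis mult_pos_pos order_less_le_trans)
      with le have "norm (w - z) / (norm (w - complex_of_real x) * norm (z - complex_of_real x) ^ 2)
                 \<le> norm (w - z) / (Im z / 2 * Im z ^ 2)"
        by (intro divide_left_mono) auto
      then show "norm ((w - z) / ((w - complex_of_real x) * (z - complex_of_real x) ^ 2))
                 \<le> norm (w - z) * (2 / Im z ^ 3)"
        by (simp add: norm_divide norm_mult norm_power power3_eq_cube power2_eq_square)
    qed
    finally show ?thesis .
  qed
  have "eventually (\<lambda>w. Im w > Im z / 2) (at z)"
    using z by (intro order_tendstoD(1)[OF tendsto_Im[OF tendsto_ident_at]]) simp
  moreover have "eventually (\<lambda>w. w \<noteq> z) (at z)"
    by (simp add: eventually_at_filter)
  ultimately have "eventually (\<lambda>w. norm ((G w - G z) / (w - z) - D) \<le> norm (w - z) * (2 / Im z ^ 3)) (at z)"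
    by eventually_elim (rule bound)
  moreover have "((\<lambda>w. norm (w - z) * (2 / Im z ^ 3)) \<longlongrightarrow> 0) (at z)"
    by (intro tendsto_eq_intros) auto
  ultimately have "((\<lambda>w. (G w - G z) / (w - z) - D) \<longlongrightarrow> 0) (at z)"
    by (rule Lim_null_comparison)
  then have "((\<lambda>w. (G w - G z) / (w - z)) \<longlongrightarrow> D) (at z)"
    by (rule LIM_zero_cancel)
  then show ?thesis
    unfolding G_def D_def has_field_derivative_iff .
qed

lemma Im_cauchy_transform_neg:
  assumes \<mu>: "real_prob_measure \<mu>" and z: "Im z > 0"
  shows "Im (cauchy_transform \<mu> z) < 0"
proof -
  interpret prob_space \<mu>
    using \<mu> unfolding real_prob_measure_def by simp
  have i: "integrable \<mu> (\<lambda>x. 1 / (z - complex_of_real x))"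
    using integrable_cauchy_kernel_power[OF \<mu> z, of 1] by simp
  have "expectation (\<lambda>x. Im (1 / (z - complex_of_real x))) < 0"
    using i z by (intro expectation_less) (auto simp: Im_complex_div_lt_0)
  then show ?thesis
    unfolding cauchy_transform_def using integral_Im[OF i] by simp
qed

lemma F_transform_upper_half:
  "real_prob_measure \<mu> \<Longrightarrow> F_transform \<mu> ` upper_half \<subseteq> upper_half"
  using Im_cauchy_transform_neg unfolding F_transform_def upper_half_def
  by (auto simp: Im_complex_div_gt_0)

lemma holomorphic_on_F_transform:
  assumes \<mu>: "real_prob_measure \<mu>"
  shows "F_transform \<mu> holomorphic_on upper_half"
proof -
  have "cauchy_transform \<mu> holomorphic_on upper_half"
    using has_field_derivative_cauchy_transform[OF \<mu>] open_upper_half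
    by (subst holomorphic_on_open) (auto simp: upper_half_def)
  moreover have "cauchy_transform \<mu> z \<noteq> 0" if "z \<in> upper_half" for z
    using Im_cauchy_transform_neg[OF \<mu>] that unfolding upper_half_def by force
  ultimately have "(\<lambda>z. 1 / cauchy_transform \<mu> z) holomorphic_on upper_half"
    by (intro holomorphic_intros)
  then show ?thesis
    unfolding F_transform_def[abs_def] .
qed

lemma voiculescu_transform_open_domain:
  assumes "has_voiculescu_transform \<mu> \<phi>"
  obtains U where "open U" "U \<noteq> {}" "U \<subseteq> upper_half"
    "\<And>z. z \<in> U \<Longrightarrow> z + \<phi> z \<in> upper_half \<and> F_transform \<mu> (z + \<phi> z) = z"
proof -
  from assms obtain \<eta> M where "\<eta> > 0" "M > 0"
    and inv: "\<forall>z\<in>trunc_cone \<eta> M. z + \<phi> z \<in> upper_half \<and> F_transform \<mu> (z + \<phi> z) = z"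
    unfolding has_voiculescu_transform_def by blast
  have "open (trunc_cone \<eta> M)"
    unfolding trunc_cone_def by (intro open_Collect_conj open_Collect_less continuous_intros)
  moreover have "\<i> * complex_of_real (M + 1) \<in> trunc_cone \<eta> M"
    using \<open>\<eta> > 0\<close> \<open>M > 0\<close> unfolding trunc_cone_def by simp
  moreover have "trunc_cone \<eta> M \<subseteq> upper_half"
    using \<open>M > 0\<close> unfolding trunc_cone_def upper_half_def by auto
  ultimately show ?thesis
    using inv by (intro that[of "trunc_cone \<eta> M"]) auto
qed

lemma UI_if_voiculescu_univalent:
  assumes \<mu>: "real_prob_measure \<mu>" and \<phi>: "has_voiculescu_transform \<mu> \<phi>"
    and holo: "(\<lambda>z. z + \<phi> z) holomorphic_on upper_half"
    and inj: "inj_on (\<lambda>z. z + \<phi> z) upper_half"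
  shows "UI \<mu>"
proof -
  define H where "H z = z + \<phi> z" for z
  define F where "F = F_transform \<mu>"
  obtain U where U: "open U" "U \<noteq> {}" "U \<subseteq> upper_half"
    and inv: "\<And>z. z \<in> U \<Longrightarrow> H z \<in> upper_half \<and> F (H z) = z"
    using voiculescu_transform_open_domain[OF \<phi>] unfolding H_def F_def by metis
  have "open (H ` U)"
    using U holo inj unfolding H_def
    by (intro open_mapping_thm3) (auto intro: holomorphic_on_subset inj_on_subset)
  have HF: "H (F w) = w" if "w \<in> upper_half" for w
  proof (rule analytic_continuation_open[where s = "H ` U" and s' = upper_half
        and f = "\<lambda>w. H (F w)" and g = "\<lambda>w. w"])
    show "H ` U \<subseteq> upper_half" "H ` U \<noteq> {}"
      using U inv by auto
    show "(\<lambda>w. H (F w)) holomorphic_on upper_half"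
      using holomorphic_on_compose_gen[OF holomorphic_on_F_transform[OF \<mu>] holo
          F_transform_upper_half[OF \<mu>]]
      unfolding H_def F_def o_def .
    show "H (F v) = v" if "v \<in> H ` U" for v
      using that inv by auto
  qed (use \<open>open (H ` U)\<close> open_upper_half connected_upper_half that in auto)
  have "inj_on F upper_half"
    using HF by (rule inj_on_inverseI)
  then show ?thesis
    unfolding UI_def using holo inj HF unfolding H_def F_def by blast
qed

lemma voiculescu_univalent_if_UI:
  assumes "UI \<mu>" and \<phi>: "has_voiculescu_transform \<mu> \<phi>"
    and holo: "(\<lambda>z. z + \<phi> z) holomorphic_on upper_half"
  shows "inj_on (\<lambda>z. z + \<phi> z) upper_half"
proof -
  obtain h where h: "h holomorphic_on upper_half" "inj_on h upper_half"
    and hF: "\<And>z. z \<in> upper_half \<Longrightarrow> h (F_transform \<mu> z) = z"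
    using \<open>UI \<mu>\<close> unfolding UI_def by blast
  obtain U where U: "open U" "U \<noteq> {}" "U \<subseteq> upper_half"
    and inv: "\<And>z. z \<in> U \<Longrightarrow> z + \<phi> z \<in> upper_half \<and> F_transform \<mu> (z + \<phi> z) = z"
    using voiculescu_transform_open_domain[OF \<phi>] by blast
  have "h z = z + \<phi> z" if "z \<in> upper_half" for z
  proof (rule analytic_continuation_open[where s = U and s' = upper_half
        and f = h and g = "\<lambda>z. z + \<phi> z"])
    fix u
    assume "u \<in> U"
    then have "F_transform \<mu> (u + \<phi> u) = u" "u + \<phi> u \<in> upper_half"
      using inv by auto
    then show "h u = u + \<phi> u"
      using hF by metis
  qed (use U h(1) holo open_upper_half connected_upper_half that in simp_all)
  then show ?thesis
    using inj_on_cong[of upper_half h "\<lambda>z. z + \<phi> z"] h(2) by simp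
qed

lemma inj_on_upper_half_add_reciprocal:
  "inj_on (\<lambda>z. z + 1 / (z - complex_of_real c)) upper_half"
proof (rule inj_onI)
  fix a b
  assume "a \<in> upper_half" "b \<in> upper_half"
    and eq: "a + 1 / (a - complex_of_real c) = b + 1 / (b - complex_of_real c)"
  define p q where "p = a - complex_of_real c" and "q = b - complex_of_real c"
  have p: "Im p > 0" and q: "Im q > 0"
    using \<open>a \<in> upper_half\<close> \<open>b \<in> upper_half\<close> by (auto simp: upper_half_def p_def q_def)
  then have "p \<noteq> 0" "q \<noteq> 0"
    by auto
  have "p + 1 / p = q + 1 / q"
    using eq unfolding p_def q_def by (simp add: algebra_simps)
  then have "(p - q) * (p * q - 1) = 0"
    using \<open>p \<noteq> 0\<close> \<open>q \<noteq> 0\<close> by (simp add: field_simps)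
  moreover have "Im (1 / q) < 0"
    using q by (simp add: Im_complex_div_lt_0)
  then have "p \<noteq> 1 / q"
    using p by auto
  ultimately have "p = q"
    using \<open>q \<noteq> 0\<close> by (auto simp: eq_divide_eq)
  then show "a = b"
    unfolding p_def q_def by simp
qed

lemma not_inj_on_upper_half_add_two_reciprocals:
  "\<not> inj_on (\<lambda>z. z + (1 / (z - 1) + 1 / (z + 1))) upper_half"
proof
  assume inj: "inj_on (\<lambda>z. z + (1 / (z - 1) + 1 / (z + 1))) upper_half"
  have on_imaginary_axis: "\<i> * of_real y + (1 / (\<i> * of_real y - 1) + 1 / (\<i> * of_real y + 1))
       = \<i> * of_real (y - 2 * y / (y ^ 2 + 1))" for y :: real
    using add_nonneg_pos[of "y ^ 2" 1]
    by (simp add: complex_eq_iff Re_divide Im_divide power2_eq_square add_divide_distrib diff_divide_distrib)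
  \<comment> \<open>the positive root of \<open>5b\<^sup>2 + 4b - 3\<close>, the second solution of \<open>y - 2y/(y\<^sup>2 + 1) = -3/10\<close>\<close>
  define b :: real where "b = (sqrt 19 - 2) / 5"
  have "sqrt 19 > (2::real)"
    using real_sqrt_less_iff[of 4 19] by simp
  then have "b > 0"
    unfolding b_def by simp
  have "10 * b * (b ^ 2 + 1) - 20 * b + 3 * (b ^ 2 + 1) = (2 * b - 1) * (5 * b ^ 2 + 4 * b - 3)"
    by (simp add: algebra_simps power2_eq_square)
  also have "5 * b ^ 2 + 4 * b - 3 = 0"
    unfolding b_def by (simp add: power2_eq_square field_simps)
  finally have "b - 2 * b / (b ^ 2 + 1) = (1 / 2) - 2 * (1 / 2) / ((1 / 2) ^ 2 + 1)"
    using add_nonneg_pos[of "b ^ 2" 1] by (simp add: field_simps power2_eq_square)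
  then have "(\<lambda>z. z + (1 / (z - 1) + 1 / (z + 1))) (\<i> * of_real b)
           = (\<lambda>z. z + (1 / (z - 1) + 1 / (z + 1))) (\<i> * of_real (1 / 2))"
    by (simp only: on_imaginary_axis)
  moreover have "\<i> * of_real b \<in> upper_half" "\<i> * of_real (1 / 2) \<in> upper_half"
    using \<open>b > 0\<close> by (auto simp: upper_half_def)
  ultimately have "\<i> * of_real b = \<i> * of_real (1 / 2)"
    by (rule inj_onD[OF inj])
  then have "b = 1 / 2"
    by (simp add: complex_eq_iff)
  then have "sqrt 19 = (9 / 2 :: real)"
    unfolding b_def by simp
  then have "(9 / 2 :: real) ^ 2 = 19"
    by (metis real_sqrt_pow2 zero_le_numeral)
  then show False
    by (simp add: power2_eq_square)
qed

theorem mainTheorem12: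
  fixes \<nu> lam \<rho> :: "real measure"
  assumes "real_prob_measure \<nu>"
      and "has_voiculescu_transform \<nu> (\<lambda>z. 1 / (z - 1))"
      and "real_prob_measure lam"
      and "has_voiculescu_transform lam (\<lambda>z. 1 / (z + 1))"
      and "real_prob_measure \<rho>"
      and "has_voiculescu_transform \<rho> (\<lambda>z. 1 / (z - 1) + 1 / (z + 1))"
  shows "UI \<nu> \<and> UI lam \<and> \<not> UI \<rho>"
proof (intro conjI)
  have holo: "(\<lambda>z. z + 1 / (z - complex_of_real c)) holomorphic_on upper_half" for c
    by (intro holomorphic_intros) (auto simp: upper_half_def complex_eq_iff)
  show "UI \<nu>"
    using UI_if_voiculescu_univalent[OF assms(1,2)] holo[of 1]
      inj_on_upper_half_add_reciprocal[of 1] by simp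
  show "UI lam"
    using UI_if_voiculescu_univalent[OF assms(3,4)] holo[of "-1"]
      inj_on_upper_half_add_reciprocal[of "-1"] by simp
  have "(\<lambda>z. z + (1 / (z - 1) + 1 / (z + 1))) holomorphic_on upper_half"
    by (intro holomorphic_intros) (auto simp: upper_half_def complex_eq_iff)
  then show "\<not> UI \<rho>"
    using voiculescu_univalent_if_UI[OF _ assms(6)] not_inj_on_upper_half_add_two_reciprocals
    by blast
qed

end
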